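(* Let $\gamma=(q_i)_{i=0,\dots,r}$ be a finite sequence of modes such that $D_{q_i}\cap D_{q_{i+1}}\neq\emptyset$ for all $i$, let $\Omega_\gamma=\bigcup_{i=0}^rD_{q_i}$, and let $\mathcal{T}_f\subset D_{q_0}$. Define targets recursively by $\tau_0=\mathcal{T}_f$ and $\tau_{i+1}=\mathcal{C}_{\mathcal{H}}(\tau_i,D_{q_i})\cap G_{(q_i,q_{i+1})}$ for $i=0,\dots,r-1$, where $G_{(q_i,q_{i+1})}=\partial D_{q_i}\cap\partial D_{q_{i+1}}$, and set $$\underline{\mathcal{C}}_{\mathcal{H}}(\Omega_\gamma)=\mathcal{C}_{\mathcal{H}}(\tau_0,D_{q_0})\cup\mathcal{C}_{\mathcal{H}}(\tau_1,D_{q_1})\cup\dots\cup\mathcal{C}_{\mathcal{H}}(\tau_r,D_{q_r}).$$ Then $\underline{\mathcal{C}}_{\mathcal{H}}(\Omega_\gamma)\subset\mathcal{C}_{\mathcal{H}}(\mathcal{T}_f,\Omega_\gamma)$.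
   Context: Let $\mathbb{U}_m\subset\mathbb{R}^m$ be a compact convex polytope and $f_h:\mathbb{R}^n\times\mathbb{U}_m\to\mathbb{R}^n$ the continuous piecewise affine vector field of the hybrid model (affine on each simplex of a simplicial mesh of $\mathbb{R}^n\times\mathbb{U}_m$ whose projections onto $\mathbb{R}^n$ form a simplicial mesh $(D_q)_{q\in\mathcal{Q}}$ of $\mathbb{R}^n$; the $D_q$ are the cells of modes $q$). For $\mathcal{T}\subset D\subset\mathbb{R}^n$, $\mathcal{C}_{\mathcal{H}}(\mathcal{T},D)$ is the set of $X_0\in D$ for which there exist a finite time $T>0$ and a measurable control $u:[0,T]\to\mathbb{U}_m$ such that the solution $X_h$ of $\dot X=f_h(X,u)$, $X(0)=X_0$ satisfies $X_h(T)\in\mathcal{T}$ and $X_h(t)\in D$ for all $t\in[0,T]$. *)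

theory Defs
  imports "HOL-Analysis.Analysis"
begin

definition simplicial_mesh :: "'a::euclidean_space set set \<Rightarrow> 'a set \<Rightarrow> bool" where
  "simplicial_mesh M X \<longleftrightarrow>
     (\<forall>S\<in>M. (aff_dim X) simplex S) \<and>
     \<Union>M = X \<and>
     (\<forall>S\<in>M. \<forall>S'\<in>M. (S \<inter> S') face_of S \<and> (S \<inter> S') face_of S') \<and>
     (\<forall>K. compact K \<longrightarrow> finite {S\<in>M. S \<inter> K \<noteq> {}})"

definition admissible_control :: "'b::euclidean_space set \<Rightarrow> real \<Rightarrow> (real \<Rightarrow> 'b) \<Rightarrow> bool" where
  "admissible_control U T u \<longleftrightarrow>
     u \<in> borel_measurable (restrict_space lborel {0..T}) \<and> (\<forall>t\<in>{0..T}. u t \<in> U)"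

text \<open>Caratheodory solution of X' = f(X,u), X(0) = X0 on [0,T].\<close>
definition is_solution :: "('a::euclidean_space \<Rightarrow> 'b \<Rightarrow> 'a) \<Rightarrow> (real \<Rightarrow> 'b) \<Rightarrow> 'a \<Rightarrow> real \<Rightarrow> (real \<Rightarrow> 'a) \<Rightarrow> bool" where
  "is_solution f u X0 T X \<longleftrightarrow>
     X 0 = X0 \<and> continuous_on {0..T} X \<and>
     (\<forall>t\<in>{0..T}. ((\<lambda>s. f (X s) (u s)) has_integral (X t - X0)) {0..t})"

definition capture_basin :: "('a::euclidean_space \<Rightarrow> 'b::euclidean_space \<Rightarrow> 'a) \<Rightarrow> 'b set \<Rightarrow> 'a set \<Rightarrow> 'a set \<Rightarrow> 'a set" where
  "capture_basin f U Tg D = {X0 \<in> D. \<exists>T u X. T > 0 \<and> admissible_control U T u \<and>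
       is_solution f u X0 T X \<and> X T \<in> Tg \<and> (\<forall>t\<in>{0..T}. X t \<in> D)}"

primrec tau :: "('a::euclidean_space \<Rightarrow> 'b::euclidean_space \<Rightarrow> 'a) \<Rightarrow> 'b set \<Rightarrow> ('q \<Rightarrow> 'a set)
                 \<Rightarrow> (nat \<Rightarrow> 'q) \<Rightarrow> 'a set \<Rightarrow> nat \<Rightarrow> 'a set" where
  "tau f U D q Tf 0 = Tf"
| "tau f U D q Tf (Suc i) =
     capture_basin f U (tau f U D q Tf i) (D (q i)) \<inter> (frontier (D (q i)) \<inter> frontier (D (q (Suc i))))"

end

theory Submission
  imports Defs
begin

text \<open>A trajectory reaching an intermediate target inside one cell, followed by a trajectory
  from its endpoint to the final target inside another cell, is again an admissible trajectory
  (the integral equation splits at the junction time). Since \<open>\<tau>\<^sub>i\<^sub>+\<^sub>1\<close> lies in the capture basin of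
  \<open>\<tau>\<^sub>i\<close>, induction on \<open>i\<close> steers every point of the \<open>i\<close>-th basin to \<open>T\<^sub>f\<close> inside
  \<open>D\<^sub>q\<^sub>0 \<union> \<dots> \<union> D\<^sub>q\<^sub>i\<close>. None of the mesh, continuity or adjacency hypotheses is needed.\<close>

lemma admissible_control_concat:
  fixes u v :: "real \<Rightarrow> 'b::euclidean_space"
  assumes "0 \<le> T" "0 \<le> T'"
    and u: "admissible_control U T u" and v: "admissible_control U T' v"
  shows "admissible_control U (T + T') (\<lambda>t. if t \<le> T then u t else v (t - T))"
proof -
  have u_meas: "(\<lambda>t. indicator {0..T} t *\<^sub>R u t) \<in> borel_measurable lborel"
    using u unfolding admissible_control_def
    by (subst (asm) borel_measurable_restrict_space_iff) auto
  have "(\<lambda>t. indicator {0..T'} t *\<^sub>R v t) \<in> borel_measurable lborel"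
    using v unfolding admissible_control_def
    by (subst (asm) borel_measurable_restrict_space_iff) auto
  then have v_meas: "(\<lambda>t. indicator {0..T'} (t - T) *\<^sub>R v (t - T)) \<in> borel_measurable lborel"
    using measurable_compose[of "\<lambda>t::real. t - T" lborel lborel] by (simp add: o_def)
  have indicator_split: "(\<lambda>t. indicator {0..T + T'} t *\<^sub>R (if t \<le> T then u t else v (t - T))) =
        (\<lambda>t. indicator {0..T} t *\<^sub>R u t
             + indicator {T<..} t *\<^sub>R (indicator {0..T'} (t - T) *\<^sub>R v (t - T)))"
    using assms(1,2) by (auto simp: indicator_def fun_eq_iff)
  have "(\<lambda>t. indicator {0..T + T'} t *\<^sub>R (if t \<le> T then u t else v (t - T)))
          \<in> borel_measurable lborel"
    unfolding indicator_split using u_meas v_meas by measurable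
  then have "(\<lambda>t. if t \<le> T then u t else v (t - T))
               \<in> borel_measurable (restrict_space lborel {0..T + T'})"
    by (subst borel_measurable_restrict_space_iff) auto
  moreover have "\<forall>t\<in>{0..T + T'}. (if t \<le> T then u t else v (t - T)) \<in> U"
    using u v unfolding admissible_control_def by auto
  ultimately show ?thesis unfolding admissible_control_def by blast
qed

lemma continuous_on_concat:
  fixes X Y :: "real \<Rightarrow> 'a::topological_space"
  assumes X: "continuous_on {0..T} X" and Y: "continuous_on {0..T'} Y" and "Y 0 = X T"
  shows "continuous_on {0..T + T'} (\<lambda>t. if t \<le> T then X t else Y (t - T))"
proof (rule continuous_on_cases_le[where h="\<lambda>t. t"])
  show "continuous_on {t \<in> {0..T + T'}. t \<le> T} X"
    by (rule continuous_on_subset[OF X]) auto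
  have "continuous_on {t \<in> {0..T + T'}. T \<le> t} (Y \<circ> (\<lambda>t. t - T))"
    by (rule continuous_on_compose, intro continuous_intros,
        rule continuous_on_subset[OF Y]) auto
  then show "continuous_on {t \<in> {0..T + T'}. T \<le> t} (\<lambda>t. Y (t - T))"
    by (simp add: o_def)
  show "continuous_on {0..T + T'} (\<lambda>t. t)" by simp
  show "\<And>t. t \<in> {0..T + T'} \<Longrightarrow> t = T \<Longrightarrow> X t = Y (t - T)" using assms(3) by simp
qed

lemma is_solution_concat:
  fixes u v :: "real \<Rightarrow> 'b::euclidean_space" and f :: "'a::euclidean_space \<Rightarrow> 'b \<Rightarrow> 'a"
  assumes "0 \<le> T"
    and X: "is_solution f u X0 T X" and Y: "is_solution f v (X T) T' Y"
  shows "is_solution f (\<lambda>t. if t \<le> T then u t else v (t - T)) X0 (T + T')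
           (\<lambda>t. if t \<le> T then X t else Y (t - T))"
proof -
  let ?w = "\<lambda>t. if t \<le> T then u t else v (t - T)"
  let ?Z = "\<lambda>t. if t \<le> T then X t else Y (t - T)"
  have X_int: "\<And>t. t \<in> {0..T} \<Longrightarrow> ((\<lambda>s. f (X s) (u s)) has_integral (X t - X0)) {0..t}"
    and Y_int: "\<And>t. t \<in> {0..T'} \<Longrightarrow> ((\<lambda>s. f (Y s) (v s)) has_integral (Y t - X T)) {0..t}"
    using X Y unfolding is_solution_def by auto
  have "((\<lambda>s. f (?Z s) (?w s)) has_integral (?Z t - X0)) {0..t}" if t: "t \<in> {0..T + T'}" for t
  proof (cases "t \<le> T")
    case True
    have "((\<lambda>s. f (X s) (u s)) has_integral (X t - X0)) {0..t}"
      using X_int True t by auto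
    then show ?thesis
      using True by (rule_tac has_integral_eq[rotated]) auto
  next
    case False
    have first: "((\<lambda>s. f (?Z s) (?w s)) has_integral (X T - X0)) {0..T}"
      using X_int[of T] \<open>0 \<le> T\<close> by (rule_tac has_integral_eq[rotated]) auto
    have "((\<lambda>s. f (Y s) (v s)) has_integral (Y (t - T) - X T)) (cbox 0 (t - T))"
      using Y_int[of "t - T"] False t by auto
    from has_integral_affinity'[OF this, of 1 "- T"]
    have "((\<lambda>s. f (Y (s - T)) (v (s - T))) has_integral (Y (t - T) - X T)) {T..t}"
      by simp
    then have second: "((\<lambda>s. f (?Z s) (?w s)) has_integral (Y (t - T) - X T)) {T..t}"
      by (rule has_integral_spike_finite[where S="{T}", rotated 2]) auto
    have "((\<lambda>s. f (?Z s) (?w s)) has_integral ((X T - X0) + (Y (t - T) - X T))) {0..t}"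
      by (rule has_integral_combine[OF _ _ first second]) (use \<open>0 \<le> T\<close> False in auto)
    then show ?thesis using False by simp
  qed
  moreover have "continuous_on {0..T + T'} ?Z"
    using X Y by (intro continuous_on_concat) (auto simp: is_solution_def)
  ultimately show ?thesis
    using X \<open>0 \<le> T\<close> unfolding is_solution_def by auto
qed

lemma capture_basin_mono_domain:
  "A \<subseteq> B \<Longrightarrow> capture_basin f U Tg A \<subseteq> capture_basin f U Tg B"
  unfolding capture_basin_def by blast

lemma capture_basin_trans:
  assumes "Tg \<subseteq> capture_basin f U Tf B"
  shows "capture_basin f U Tg A \<subseteq> capture_basin f U Tf (A \<union> B)"
proof
  fix X0 assume "X0 \<in> capture_basin f U Tg A"
  then obtain T u X where "X0 \<in> A" "T > 0" and u: "admissible_control U T u"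
    and X: "is_solution f u X0 T X" and "X T \<in> Tg" and X_in: "\<forall>t\<in>{0..T}. X t \<in> A"
    unfolding capture_basin_def by blast
  with assms obtain T' v Y where "T' > 0" and v: "admissible_control U T' v"
    and Y: "is_solution f v (X T) T' Y" and "Y T' \<in> Tf" and Y_in: "\<forall>t\<in>{0..T'}. Y t \<in> B"
    unfolding capture_basin_def by blast
  let ?w = "\<lambda>t. if t \<le> T then u t else v (t - T)"
  let ?Z = "\<lambda>t. if t \<le> T then X t else Y (t - T)"
  have "admissible_control U (T + T') ?w"
    using \<open>T > 0\<close> \<open>T' > 0\<close> u v by (intro admissible_control_concat) auto
  moreover have "is_solution f ?w X0 (T + T') ?Z"
    using \<open>T > 0\<close> X Y by (intro is_solution_concat) auto
  moreover have "?Z (T + T') \<in> Tf" using \<open>Y T' \<in> Tf\<close> \<open>T' > 0\<close> by simp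
  moreover have "\<forall>t\<in>{0..T + T'}. ?Z t \<in> A \<union> B" using X_in Y_in by auto
  ultimately show "X0 \<in> capture_basin f U Tf (A \<union> B)"
    using \<open>X0 \<in> A\<close> \<open>T > 0\<close> \<open>T' > 0\<close> unfolding capture_basin_def
    by (intro CollectI conjI UnI1 exI[where x="T + T'"] exI[where x="?w"] exI[where x="?Z"]) auto
qed

lemma capture_basin_tau_subset:
  "capture_basin f U (tau f U D q Tf i) (D (q i)) \<subseteq> capture_basin f U Tf (\<Union>j\<le>i. D (q j))"
proof (induction i)
  case 0
  then show ?case by (simp add: capture_basin_mono_domain)
next
  case (Suc i)
  then have "tau f U D q Tf (Suc i) \<subseteq> capture_basin f U Tf (\<Union>j\<le>i. D (q j))"
    by auto
  then have "capture_basin f U (tau f U D q Tf (Suc i)) (D (q (Suc i)))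
               \<subseteq> capture_basin f U Tf (D (q (Suc i)) \<union> (\<Union>j\<le>i. D (q j)))"
    by (rule capture_basin_trans)
  also have "D (q (Suc i)) \<union> (\<Union>j\<le>i. D (q j)) = (\<Union>j\<le>Suc i. D (q j))"
    by (auto simp: atMost_Suc)
  finally show ?case .
qed

theorem proposition10:
  fixes f :: "'a::euclidean_space \<Rightarrow> 'b::euclidean_space \<Rightarrow> 'a"
    and U :: "'b set" and M :: "('a \<times> 'b) set set"
    and Q :: "'q set" and D :: "'q \<Rightarrow> 'a set"
    and q :: "nat \<Rightarrow> 'q" and r :: nat and Tf :: "'a set"
  assumes U_polytope: "polytope U"
    and mesh: "simplicial_mesh M (UNIV \<times> U)"
    and f_cont: "continuous_on (UNIV \<times> U) (\<lambda>z. f (fst z) (snd z))"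
    and f_pw_affine: "\<forall>S\<in>M. \<exists>A c. linear A \<and> (\<forall>z\<in>S. f (fst z) (snd z) = A z + c)"
    and proj_mesh: "D ` Q = (\<lambda>S. fst ` S) ` M"
    and D_mesh: "simplicial_mesh (D ` Q) UNIV"
    and q_modes: "\<forall>i\<le>r. q i \<in> Q"
    and q_adj: "\<forall>i<r. D (q i) \<inter> D (q (Suc i)) \<noteq> {}"
    and Tf_sub: "Tf \<subseteq> D (q 0)"
  shows "(\<Union>i\<le>r. capture_basin f U (tau f U D q Tf i) (D (q i)))
           \<subseteq> capture_basin f U Tf (\<Union>i\<le>r. D (q i))"
proof (intro UN_least)
  fix i assume "i \<in> {..r}"
  then have "(\<Union>j\<le>i. D (q j)) \<subseteq> (\<Union>j\<le>r. D (q j))"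
    by (intro UN_mono) auto
  then show "capture_basin f U (tau f U D q Tf i) (D (q i))
               \<subseteq> capture_basin f U Tf (\<Union>j\<le>r. D (q j))"
    by (rule order_trans[OF capture_basin_tau_subset capture_basin_mono_domain])
qed

end
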